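(* A matrix scheme $(\Theta,D)$ contains uncertainty if and only if there exist $d_1,d_2\in D$ and $\theta,\theta'\in\Theta$ such that $d_1(\theta)<d_2(\theta)$ and $d_2(\theta')<d_1(\theta')$.
   Context: A preference relation on a set $X$ is a binary relation $\prec$ on $X$ that is asymmetric ($x\prec y \Rightarrow$ not $y\prec x$) and negatively transitive (not $x\prec y$ and not $y\prec z$ $\Rightarrow$ not $x\prec z$). A matrix scheme is a pair $(\Theta,D)$ where $\Theta$ is an arbitrary nonempty set and $D$ is a set of real-valued functions on $\Theta$. Domination on $D$ is the relation $\prec$ defined by: $d_1\prec d_2$ iff $d_1(\theta)\le d_2(\theta)$ for all $\theta\in\Theta$ and $d_1(\theta^* )<d_2(\theta^* )$ for some $\theta^*\in\Theta$. A projection of preference of consequences in $(\Theta,D)$ is a preference relation $\prec^P$ on $D$ such that $d_1\prec d_2\Rightarrow d_1\prec^P d_2$ for all $d_1,d_2\in D$. The matrix scheme $(\Theta,D)$ contains uncertainty if the projection of preference of consequences in $(\Theta,D)$ is not unique (i.e. there are at least two distinct projections). *)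

theory Defs
  imports Complex_Main
begin

definition preference_relation :: "'b set \<Rightarrow> ('b \<times> 'b) set \<Rightarrow> bool" where
  "preference_relation X R \<longleftrightarrow> R \<subseteq> X \<times> X \<and>
     (\<forall>x\<in>X. \<forall>y\<in>X. (x, y) \<in> R \<longrightarrow> (y, x) \<notin> R) \<and>
     (\<forall>x\<in>X. \<forall>y\<in>X. \<forall>z\<in>X. (x, y) \<notin> R \<and> (y, z) \<notin> R \<longrightarrow> (x, z) \<notin> R)"

text \<open>Matrix scheme: the parameter set \<Theta> is the (nonempty) type 'a; D is a set of
  real-valued functions on it. Domination:\<close>
definition dominates :: "('a \<Rightarrow> real) \<Rightarrow> ('a \<Rightarrow> real) \<Rightarrow> bool" where
  "dominates d1 d2 \<longleftrightarrow> (\<forall>\<theta>. d1 \<theta> \<le> d2 \<theta>) \<and> (\<exists>\<theta>. d1 \<theta> < d2 \<theta>)"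

definition projection_of_preference :: "('a \<Rightarrow> real) set \<Rightarrow> (('a \<Rightarrow> real) \<times> ('a \<Rightarrow> real)) set \<Rightarrow> bool" where
  "projection_of_preference D P \<longleftrightarrow> preference_relation D P \<and>
     (\<forall>d1\<in>D. \<forall>d2\<in>D. dominates d1 d2 \<longrightarrow> (d1, d2) \<in> P)"

definition contains_uncertainty :: "('a \<Rightarrow> real) set \<Rightarrow> bool" where
  "contains_uncertainty D \<longleftrightarrow>
     (\<exists>P1 P2. projection_of_preference D P1 \<and> projection_of_preference D P2 \<and> P1 \<noteq> P2)"

end

theory Submission
  imports Defs
begin

text \<open>If any two members of D are comparable pointwise, every projection must contain
  domination and, by asymmetry, can contain nothing else, so the projection is unique.
  Conversely, if d1(\<theta>) < d2(\<theta>) and d2(\<theta>') < d1(\<theta>'), well-order \<Theta> and order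
  functions lexicographically by their first difference; this strict linear order extends
  domination. Comparing values at \<theta> first and breaking ties lexicographically gives a
  projection that prefers d2 to d1; doing the same at \<theta>' gives one that does not.\<close>

lemma projection_of_preference_eq_dominates:
  assumes comparable: "\<And>d e. d \<in> D \<Longrightarrow> e \<in> D \<Longrightarrow> (\<forall>\<theta>. d \<theta> \<le> e \<theta>) \<or> (\<forall>\<theta>. e \<theta> \<le> d \<theta>)"
    and P: "projection_of_preference D P"
  shows "P = {(d, e). d \<in> D \<and> e \<in> D \<and> dominates d e}"
proof -
  have sub: "P \<subseteq> D \<times> D"
    and asym: "\<And>d e. d \<in> D \<Longrightarrow> e \<in> D \<Longrightarrow> (d, e) \<in> P \<Longrightarrow> (e, d) \<notin> P"
    and ext: "\<And>d e. d \<in> D \<Longrightarrow> e \<in> D \<Longrightarrow> dominates d e \<Longrightarrow> (d, e) \<in> P"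
    using P unfolding projection_of_preference_def preference_relation_def by blast+
  have "dominates d e" if de: "(d, e) \<in> P" for d e
  proof -
    have D: "d \<in> D" "e \<in> D" using de sub by auto
    then have "d \<noteq> e" using asym de by blast
    then obtain t where "d t \<noteq> e t" by auto
    moreover have "\<not> dominates e d" using asym ext D de by blast
    ultimately show ?thesis
      using comparable[OF D] unfolding dominates_def by (metis order.not_eq_order_implies_strict)
  qed
  then show ?thesis using sub ext by auto
qed

lemma preference_relation_restrict:
  assumes "strict_linear_order Q"
  shows "preference_relation X (Q \<inter> X \<times> X)"
proof -
  have trans: "\<And>x y z. (x, y) \<in> Q \<Longrightarrow> (y, z) \<in> Q \<Longrightarrow> (x, z) \<in> Q"
    and irrefl: "\<And>x. (x, x) \<notin> Q"
    and total: "\<And>x y. x \<noteq> y \<Longrightarrow> (x, y) \<in> Q \<or> (y, x) \<in> Q"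
    using assms unfolding strict_linear_order_on_def trans_def irrefl_def total_on_def
    by blast+
  have "(y, x) \<notin> Q" if "(x, y) \<in> Q" for x y
    using that trans irrefl by blast
  moreover have "(x, z) \<notin> Q" if "(x, y) \<notin> Q" "(y, z) \<notin> Q" for x y z
    using that trans irrefl total by metis
  ultimately show ?thesis unfolding preference_relation_def by blast
qed

lemma projection_of_preference_restrict:
  assumes "strict_linear_order Q" and "\<And>d e. dominates d e \<Longrightarrow> (d, e) \<in> Q"
  shows "projection_of_preference D (Q \<inter> D \<times> D)"
  using assms preference_relation_restrict unfolding projection_of_preference_def by blast

definition lex_fun :: "'a rel \<Rightarrow> ('a \<Rightarrow> 'b::linorder) rel" where
  "lex_fun w = {(d, e). \<exists>t. d t < e t \<and> (\<forall>s. (s, t) \<in> w \<longrightarrow> d s = e s)}"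

lemma irrefl_lex_fun: "irrefl (lex_fun w)"
  by (auto simp: irrefl_def lex_fun_def)

lemma trans_lex_fun:
  assumes "trans w" and "total w"
  shows "trans (lex_fun w)"
proof (rule transI)
  fix d e f :: "'a \<Rightarrow> 'b"
  assume "(d, e) \<in> lex_fun w" "(e, f) \<in> lex_fun w"
  then obtain t u where t: "d t < e t" "\<And>s. (s, t) \<in> w \<Longrightarrow> d s = e s"
    and u: "e u < f u" "\<And>s. (s, u) \<in> w \<Longrightarrow> e s = f s"
    by (auto simp: lex_fun_def)
  consider "t = u" | "(t, u) \<in> w" | "(u, t) \<in> w"
    using \<open>total w\<close> by (auto simp: total_on_def)
  then show "(d, f) \<in> lex_fun w"
  proof cases
    case 1
    with t u have "d t < f t" "\<forall>s. (s, t) \<in> w \<longrightarrow> d s = f s"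
      by auto
    then show ?thesis by (auto simp: lex_fun_def)
  next
    case 2
    with t u \<open>trans w\<close> have "d t < f t" "\<forall>s. (s, t) \<in> w \<longrightarrow> d s = f s"
      by (metis transD)+
    then show ?thesis by (auto simp: lex_fun_def)
  next
    case 3
    with t u \<open>trans w\<close> have "d u < f u" "\<forall>s. (s, u) \<in> w \<longrightarrow> d s = f s"
      by (metis transD)+
    then show ?thesis by (auto simp: lex_fun_def)
  qed
qed

lemma total_lex_fun:
  assumes "wf w"
  shows "total (lex_fun w)"
proof (rule total_onI)
  fix d e :: "'a \<Rightarrow> 'b"
  assume "d \<noteq> e"
  then obtain x where "x \<in> {t. d t \<noteq> e t}" by auto
  with assms obtain t where "d t \<noteq> e t" and below: "\<And>s. (s, t) \<in> w \<Longrightarrow> d s = e s"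
    by (rule wfE_min) blast
  then consider "d t < e t" | "e t < d t" by (auto simp: neq_iff)
  then show "(d, e) \<in> lex_fun w \<or> (e, d) \<in> lex_fun w"
  proof cases
    case 1
    with below have "(d, e) \<in> lex_fun w" unfolding lex_fun_def by blast
    then show ?thesis ..
  next
    case 2
    with below have "(e, d) \<in> lex_fun w" unfolding lex_fun_def by force
    then show ?thesis ..
  qed
qed

lemma strict_linear_order_lex_fun:
  assumes "wf w" "trans w" "total w"
  shows "strict_linear_order (lex_fun w)"
  using assms irrefl_lex_fun trans_lex_fun total_lex_fun
  unfolding strict_linear_order_on_def by blast

lemma dominates_imp_lex_fun:
  assumes "wf w" and "dominates d e"
  shows "(d, e) \<in> lex_fun w"
proof -
  have "d \<noteq> e" "(e, d) \<notin> lex_fun w"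
    using \<open>dominates d e\<close> unfolding dominates_def lex_fun_def by (auto simp: not_less)
  then show ?thesis using total_lex_fun[OF \<open>wf w\<close>] by (auto simp: total_on_def)
qed

lemma exists_strict_well_order: "\<exists>w::'a rel. wf w \<and> trans w \<and> total w"
proof -
  obtain r :: "'a rel" where "well_order_on UNIV r"
    using well_ordering by metis
  then have "strict_linear_order (r - Id)" and "wf (r - Id)"
    by (auto simp: well_order_on_def intro: strict_linear_order_on_diff_Id)
  then show ?thesis unfolding strict_linear_order_on_def by blast
qed

definition lex_at :: "'a \<Rightarrow> ('a \<Rightarrow> 'b::linorder) rel \<Rightarrow> ('a \<Rightarrow> 'b) rel" where
  "lex_at \<theta> L = inv_image ({(a, b). a < b} <*lex*> L) (\<lambda>d. (d \<theta>, d))"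

lemma strict_linear_order_lex_at:
  assumes "strict_linear_order L"
  shows "strict_linear_order (lex_at \<theta> L)"
proof -
  have less: "strict_linear_order {(a, b :: 'b). a < b}"
    by (auto simp: strict_linear_order_on_def trans_def irrefl_def total_on_def)
  have "inj (\<lambda>d :: 'a \<Rightarrow> 'b. (d \<theta>, d))" by (rule injI) simp
  with less assms show ?thesis
    unfolding lex_at_def strict_linear_order_on_def
    by (auto intro: trans_inv_image total_inv_image simp: irrefl_def)
qed

lemma dominates_imp_lex_at:
  assumes "(d, e) \<in> L" and "dominates d e"
  shows "(d, e) \<in> lex_at \<theta> L"
  using assms by (auto simp: lex_at_def dominates_def order.order_iff_strict)

lemma not_contains_uncertainty_if_comparable:
  assumes "\<And>d e. d \<in> D \<Longrightarrow> e \<in> D \<Longrightarrow> (\<forall>\<theta>. d \<theta> \<le> e \<theta>) \<or> (\<forall>\<theta>. e \<theta> \<le> d \<theta>)"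
  shows "\<not> contains_uncertainty D"
  using projection_of_preference_eq_dominates[OF assms]
  unfolding contains_uncertainty_def by blast

lemma projection_of_preference_lex_at:
  assumes "wf w" "trans w" "total w"
  shows "projection_of_preference D (lex_at \<theta> (lex_fun w) \<inter> D \<times> D)"
proof (rule projection_of_preference_restrict)
  show "strict_linear_order (lex_at \<theta> (lex_fun w))"
    by (rule strict_linear_order_lex_at[OF strict_linear_order_lex_fun[OF assms]])
  show "(d, e) \<in> lex_at \<theta> (lex_fun w)" if "dominates d e" for d e
    by (rule dominates_imp_lex_at[OF dominates_imp_lex_fun[OF \<open>wf w\<close> that] that])
qed

lemma contains_uncertainty_if_crossing:
  assumes "d1 \<in> D" "d2 \<in> D" "d1 \<theta> < d2 \<theta>" "d2 \<theta>' < d1 \<theta>'"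
  shows "contains_uncertainty D"
proof -
  obtain w :: "'a rel" where w: "wf w" "trans w" "total w"
    using exists_strict_well_order by blast
  define P where "P t = lex_at t (lex_fun w) \<inter> D \<times> D" for t
  have "(d1, d2) \<in> P \<theta>" "(d1, d2) \<notin> P \<theta>'"
    using assms by (simp_all add: P_def lex_at_def)
  then have "P \<theta> \<noteq> P \<theta>'" by blast
  moreover have "projection_of_preference D (P t)" for t
    unfolding P_def using projection_of_preference_lex_at[OF w] .
  ultimately show ?thesis
    unfolding contains_uncertainty_def by blast
qed

theorem mainTheorem5:
  fixes D :: "('a \<Rightarrow> real) set"
  shows "contains_uncertainty D \<longleftrightarrow>
    (\<exists>d1\<in>D. \<exists>d2\<in>D. \<exists>\<theta> \<theta>'. d1 \<theta> < d2 \<theta> \<and> d2 \<theta>' < d1 \<theta>')"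
proof
  assume uncertain: "contains_uncertainty D"
  show "\<exists>d1\<in>D. \<exists>d2\<in>D. \<exists>\<theta> \<theta>'. d1 \<theta> < d2 \<theta> \<and> d2 \<theta>' < d1 \<theta>'"
  proof (rule ccontr)
    assume no_crossing: "\<not> ?thesis"
    have "(\<forall>\<theta>. d \<theta> \<le> e \<theta>) \<or> (\<forall>\<theta>. e \<theta> \<le> d \<theta>)" if "d \<in> D" "e \<in> D" for d e
      using that no_crossing by (metis not_le)
    then have "\<not> contains_uncertainty D"
      by (rule not_contains_uncertainty_if_comparable)
    with uncertain show False by contradiction
  qed
next
  assume "\<exists>d1\<in>D. \<exists>d2\<in>D. \<exists>\<theta> \<theta>'. d1 \<theta> < d2 \<theta> \<and> d2 \<theta>' < d1 \<theta>'"
  then obtain d1 d2 \<theta> \<theta>' where "d1 \<in> D" "d2 \<in> D" "d1 \<theta> < d2 \<theta>" "d2 \<theta>' < d1 \<theta>'"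
    by blast
  then show "contains_uncertainty D"
    by (rule contains_uncertainty_if_crossing)
qed

end
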